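(* Let $\langle B,\wedge,{}'\rangle$ be an algebra with $\wedge$ binary and ${}'$ unary satisfying $x\wedge y\approx y\wedge x$, $x\wedge(y\wedge z)\approx(x\wedge y)\wedge z$, $x''\approx x$, and $x'\approx (x\wedge y)'\wedge(x\wedge y')'$. Then for all $x,y\in B$: $(x\wedge y\wedge x)'=(y\wedge x)'$.
   Context: By associativity, $x\wedge y\wedge x$ is unambiguous. *)

theory Defs
  imports Main
begin

end

theory Submission
  imports Defs
begin

text \<open>
  The last axiom is Huntington's axiom written with meet. Together with
  involution it shows that the "zero" \<open>x \<and> x'\<close> does not depend on \<open>x\<close> and absorbs
  every element. Writing \<open>1\<close> for its complement, a second application of the axiom
  gives \<open>x \<and> x = x \<and> 1\<close> and \<open>x = 1 \<and> (x' \<and> x')'\<close>; since \<open>1 \<and> 1 = 1\<close>, idempotence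
  follows, and then \<open>x \<and> y \<and> x = y \<and> x \<and> x = y \<and> x\<close>.
\<close>

locale meet_huntington =
  fixes B :: "'a set" and m :: "'a \<Rightarrow> 'a \<Rightarrow> 'a" and c :: "'a \<Rightarrow> 'a"
  assumes closed_m: "\<And>x y. x \<in> B \<Longrightarrow> y \<in> B \<Longrightarrow> m x y \<in> B"
    and closed_c: "\<And>x. x \<in> B \<Longrightarrow> c x \<in> B"
    and comm: "\<And>x y. x \<in> B \<Longrightarrow> y \<in> B \<Longrightarrow> m x y = m y x"
    and assoc: "\<And>x y z. x \<in> B \<Longrightarrow> y \<in> B \<Longrightarrow> z \<in> B \<Longrightarrow> m x (m y z) = m (m x y) z"
    and invol: "\<And>x. x \<in> B \<Longrightarrow> c (c x) = x"
    and compl_split: "\<And>x y. x \<in> B \<Longrightarrow> y \<in> B \<Longrightarrow> c x = m (c (m x y)) (c (m x (c y)))"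
begin

lemma right_comm: "x \<in> B \<Longrightarrow> y \<in> B \<Longrightarrow> z \<in> B \<Longrightarrow> m (m x y) z = m (m x z) y"
  by (metis assoc comm)

lemma self_split:
  assumes x: "x \<in> B" and y: "y \<in> B"
  shows "x = m (c (m (c x) y)) (c (m (c x) (c y)))"
  using compl_split[OF closed_c[OF x] y] unfolding invol[OF x] .

lemma meet_split:
  assumes x: "x \<in> B" and y: "y \<in> B"
  shows "m x y = m x (c (m (c (m x y)) (m x (c y))))"
proof -
  have xy: "m x y \<in> B" and xy': "m x (c y) \<in> B"
    using x y by (simp_all add: closed_m closed_c)
  show ?thesis
    using compl_split[OF closed_c[OF xy] closed_c[OF xy']]
    unfolding invol[OF xy] invol[OF xy'] compl_split[OF x y, symmetric] invol[OF x] .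
qed

text \<open>Expanding \<open>x\<close> by \<open>self_split\<close>, both sides equal \<open>(x' \<and> y)' \<and> (x' \<and> y')' \<and> (x \<and> y')'\<close>.\<close>

lemma meet_compl_meet_sym:
  assumes x: "x \<in> B" and y: "y \<in> B"
  shows "m x (c (m x (c y))) = m y (c (m y (c x)))"
proof -
  define p q r where "p = c (m (c x) y)" and "q = c (m (c x) (c y))" and "r = c (m x (c y))"
  have pqr: "p \<in> B" "q \<in> B" "r \<in> B"
    unfolding p_def q_def r_def using x y by (simp_all add: closed_m closed_c)
  have "m x r = m (m p q) r"
    using arg_cong[where f = "\<lambda>u. m u r", OF self_split[OF x y]] unfolding p_def q_def .
  also have "\<dots> = m (m r q) p"
    using pqr by (metis assoc comm closed_m)
  also have "\<dots> = m (m (c (m (c y) x)) (c (m (c y) (c x)))) (c (m y (c x)))"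
    unfolding p_def q_def r_def using x y by (simp add: comm closed_c)
  also have "\<dots> = m y (c (m y (c x)))"
    unfolding self_split[OF y x, symmetric] ..
  finally show ?thesis unfolding r_def .
qed

lemma meet_compl_const:
  assumes x: "x \<in> B" and y: "y \<in> B"
  shows "m x (c x) = m y (c y)"
proof -
  have "m x (c x) = m (m x (c (m x y))) (c (m x (c y)))"
    using compl_split[OF x y] x y by (simp add: assoc closed_m closed_c)
  also have "\<dots> = m (m (c y) (c (m (c y) (c x)))) (c (m x (c y)))"
    using meet_compl_meet_sym[of x "c y"] x y by (simp add: closed_c invol)
  also have "\<dots> = m (c y) (m (c (m (c y) x)) (c (m (c y) (c x))))"
    using x y by (metis assoc comm closed_m closed_c)
  also have "\<dots> = m (c y) y"
    unfolding compl_split[OF closed_c[OF y] x, symmetric] invol[OF y] ..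
  finally show ?thesis
    using x y by (simp add: comm closed_c)
qed

lemma compl_eq_top_meet:
  assumes x: "x \<in> B" and y: "y \<in> B"
  shows "c x = m (c (m y (c y))) (c (m x x))"
proof -
  have "c x = m (c (m x x)) (c (m x (c x)))"
    using compl_split[OF x x] .
  also have "\<dots> = m (c (m x x)) (c (m y (c y)))"
    unfolding meet_compl_const[OF x y] ..
  also have "\<dots> = m (c (m y (c y))) (c (m x x))"
    using x y by (simp add: comm closed_m closed_c)
  finally show ?thesis .
qed

lemma meet_zero:
  assumes x: "x \<in> B" and y: "y \<in> B"
  shows "m x (m y (c y)) = m y (c y)"
proof -
  have zero_sq: "m z (m z (c z)) = m z (c z)" if z: "z \<in> B" for z
  proof -
    have "m z (m z (c z)) = m (m z z) (c z)"
      using z by (simp add: assoc closed_c)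
    also have "\<dots> = m (m z z) (m (c (m z (c z))) (c (m z z)))"
      using arg_cong[where f = "m (m z z)", OF compl_eq_top_meet[OF z z]] .
    also have "\<dots> = m (m (m z z) (c (m z z))) (c (m z (c z)))"
      using z by (metis assoc comm closed_m closed_c)
    also have "\<dots> = m (m z (c z)) (c (m z (c z)))"
      unfolding meet_compl_const[OF closed_m[OF z z] z] ..
    also have "\<dots> = m z (c z)"
      unfolding meet_compl_const[OF closed_m[OF z closed_c[OF z]] z] ..
    finally show ?thesis .
  qed
  show ?thesis
    using zero_sq[OF x] unfolding meet_compl_const[OF x y] .
qed

lemma meet_self_eq_meet_top:
  assumes x: "x \<in> B" and y: "y \<in> B"
  shows "m x x = m x (c (m y (c y)))"
proof -
  have "m x x = m x (c (m (c (m x x)) (m x (c x))))"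
    using meet_split[OF x x] .
  also have "\<dots> = m x (c (m x (c x)))"
    unfolding meet_zero[OF closed_c[OF closed_m[OF x x]] x] ..
  also have "\<dots> = m x (c (m y (c y)))"
    unfolding meet_compl_const[OF x y] ..
  finally show ?thesis .
qed

lemma top_idem:
  assumes y: "y \<in> B"
  shows "m (c (m y (c y))) (c (m y (c y))) = c (m y (c y))"
proof -
  let ?z = "m y (c y)"
  have z: "?z \<in> B"
    using y by (simp add: closed_m closed_c)
  show ?thesis
    using compl_eq_top_meet[OF z y] unfolding meet_zero[OF z y] by (rule sym)
qed

lemma meet_idem:
  assumes x: "x \<in> B"
  shows "m x x = x"
proof -
  let ?t = "c (m x (c x))" and ?s = "c (m (c x) (c x))"
  have t: "?t \<in> B" and s: "?s \<in> B"
    using x by (simp_all add: closed_m closed_c)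
  have x_eq: "x = m ?t ?s"
    using compl_eq_top_meet[OF closed_c[OF x] x] unfolding invol[OF x] .
  have "m x x = m x ?t"
    using meet_self_eq_meet_top[OF x x] .
  also have "\<dots> = m (m ?t ?s) ?t"
    using arg_cong[where f = "\<lambda>u. m u ?t", OF x_eq] .
  also have "\<dots> = m (m ?t ?t) ?s"
    using right_comm[OF t s t] .
  also have "\<dots> = m ?t ?s"
    unfolding top_idem[OF x] ..
  also have "\<dots> = x"
    using x_eq by (rule sym)
  finally show ?thesis .
qed

end

theorem lemma2p9:
  fixes B :: "'a set" and m :: "'a \<Rightarrow> 'a \<Rightarrow> 'a" and c :: "'a \<Rightarrow> 'a"
  assumes closed_m: "\<And>x y. x \<in> B \<Longrightarrow> y \<in> B \<Longrightarrow> m x y \<in> B"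
    and closed_c: "\<And>x. x \<in> B \<Longrightarrow> c x \<in> B"
    and comm: "\<And>x y. x \<in> B \<Longrightarrow> y \<in> B \<Longrightarrow> m x y = m y x"
    and assoc: "\<And>x y z. x \<in> B \<Longrightarrow> y \<in> B \<Longrightarrow> z \<in> B \<Longrightarrow> m x (m y z) = m (m x y) z"
    and invol: "\<And>x. x \<in> B \<Longrightarrow> c (c x) = x"
    and ax4: "\<And>x y. x \<in> B \<Longrightarrow> y \<in> B \<Longrightarrow> c x = m (c (m x y)) (c (m x (c y)))"
    and "x \<in> B" and "y \<in> B"
  shows "c (m (m x y) x) = c (m y x)"
proof -
  interpret meet_huntington B m c
    by unfold_locales (fact closed_m closed_c comm assoc invol ax4)+
  have "m (m x y) x = m (m y x) x"
    using comm \<open>x \<in> B\<close> \<open>y \<in> B\<close> by simp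
  also have "\<dots> = m y (m x x)"
    using assoc \<open>x \<in> B\<close> \<open>y \<in> B\<close> by simp
  also have "\<dots> = m y x"
    using meet_idem \<open>x \<in> B\<close> by simp
  finally show ?thesis by simp
qed

end
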